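(* Let $R$ be a nonzero commutative ring and $n\ge2$. Then $R$ has no zero divisors if and only if for all sets $\mathscr{R},\mathscr{S}$ of $R$-weighted complete graphs on $n$ vertices, $\mathscr R*\mathscr S=\{0\}$ implies $\mathscr R=\{0\}$ or $\mathscr S=\{0\}$, where $0$ denotes the graph with all weights $0$ (on the relevant vertex set).
   Context: An $R$-weighted complete graph $K$ is a finite vertex set with a weight $v_K(e)\in R$ on every 2-subset $e$. For such $H,G$ with equal vertex counts and a bijection $f:V(H)\to V(G)$, $H*_fG$ has vertex set $V(H)$ and weights $v_H(\{x,y\})\cdot v_G(\{f(x),f(y)\})$; $H*G=\{H*_fG: f \text{ bijection}\}$, and for sets $\mathscr H*\mathscr G=\bigcup_{H\in\mathscr H,G\in\mathscr G}H*G$. *)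

theory Defs
  imports Main
begin

text \<open>Vertex set is fixed to {..<n}
  (every n-vertex graph is isomorphic to one on this vertex set). A graph is
  represented by its weight function on subsets of nat; weights are only
  meaningful on 2-subsets of {..<n} and are required to be 0 elsewhere,
  so that equality of graphs is equality of weight functions.\<close>

definition edges :: "nat \<Rightarrow> nat set set" where
  "edges n = {e. e \<subseteq> {..<n} \<and> card e = 2}"

definition wgraphs :: "nat \<Rightarrow> (nat set \<Rightarrow> 'a::zero) set" where
  "wgraphs n = {w. \<forall>e. e \<notin> edges n \<longrightarrow> w e = 0}"

definition zero_graph :: "nat set \<Rightarrow> 'a::zero" where
  "zero_graph = (\<lambda>_. 0)"

definition gstar_f :: "nat \<Rightarrow> (nat set \<Rightarrow> 'a::mult_zero) \<Rightarrow> (nat set \<Rightarrow> 'a)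
    \<Rightarrow> (nat \<Rightarrow> nat) \<Rightarrow> (nat set \<Rightarrow> 'a)" where
  "gstar_f n H G f = (\<lambda>e. if e \<in> edges n then H e * G (f ` e) else 0)"

definition gstar :: "nat \<Rightarrow> (nat set \<Rightarrow> 'a::mult_zero) set \<Rightarrow> (nat set \<Rightarrow> 'a) set
    \<Rightarrow> (nat set \<Rightarrow> 'a) set" where
  "gstar n RR SS = {gstar_f n H G f | H G f.
      H \<in> RR \<and> G \<in> SS \<and> bij_betw f {..<n} {..<n}}"

end

theory Submission
  imports Defs
begin

text \<open>The symmetric group acts transitively on the edges of the complete graph, so a product
  set vanishing identically forces every weight of a factor in \<open>\<R>\<close> to annihilate every
  weight of a factor in \<open>\<S>\<close>; without zero divisors one of the factors is therefore zero.
  Conversely, for \<open>a * b = 0\<close> the singletons of the constant graphs with weights \<open>a\<close> and \<open>b\<close>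
  have product \<open>{0}\<close>, and a constant graph is zero only if its weight is.\<close>

lemma bij_image_edges:
  assumes "bij_betw f {..<n} {..<n}" and "e \<in> edges n"
  shows "f ` e \<in> edges n"
proof -
  have e: "e \<subseteq> {..<n}" "card e = 2" using assms(2) by (auto simp: edges_def)
  then have "inj_on f e" using assms(1) by (meson bij_betw_def inj_on_subset)
  with e assms(1) show ?thesis by (auto simp: edges_def card_image bij_betw_def)
qed

lemma edges_transitive:
  assumes "e \<in> edges n" and "e' \<in> edges n"
  obtains f where "bij_betw f {..<n} {..<n}" and "f ` e = e'"
proof -
  have sub: "e \<subseteq> {..<n}" "e' \<subseteq> {..<n}" and card: "card e = card e'"
    using assms by (auto simp: edges_def)
  have fin: "finite e" "finite e'" using sub finite_subset by blast+
  obtain h1 where h1: "bij_betw h1 e e'" using finite_same_card_bij[OF fin card] by blast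
  have "card ({..<n} - e) = card ({..<n} - e')"
    using sub fin card by (simp add: card_Diff_subset)
  then obtain h2 where h2: "bij_betw h2 ({..<n} - e) ({..<n} - e')"
    using finite_same_card_bij by blast
  define f where "f x = (if x \<in> e then h1 x else h2 x)" for x
  have on_e: "bij_betw f e e'"
    using h1 by (rule bij_betw_cong[THEN iffD1, rotated]) (simp add: f_def)
  have off_e: "bij_betw f ({..<n} - e) ({..<n} - e')"
    using h2 by (rule bij_betw_cong[THEN iffD1, rotated]) (simp add: f_def)
  have "bij_betw f (e \<union> ({..<n} - e)) (e' \<union> ({..<n} - e'))"
    using bij_betw_combine[OF on_e off_e] by blast
  moreover have "e \<union> ({..<n} - e) = {..<n}" "e' \<union> ({..<n} - e') = {..<n}" using sub by auto
  ultimately show ?thesis using that on_e by (metis bij_betw_imp_surj_on)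
qed

lemma gstar_subset_zero_imp_weights_annihilate:
  assumes "gstar n RR SS \<subseteq> {zero_graph}"
    and "H \<in> RR" and "G \<in> SS" and "e \<in> edges n" and "e' \<in> edges n"
  shows "H e * G e' = 0"
proof -
  obtain f where f: "bij_betw f {..<n} {..<n}" "f ` e = e'"
    using edges_transitive[OF assms(4,5)] .
  have "gstar_f n H G f \<in> gstar n RR SS" using assms(2,3) f(1) unfolding gstar_def by blast
  then have "gstar_f n H G f e = 0" using assms(1) by (auto simp: zero_graph_def)
  with assms(4) f(2) show ?thesis by (simp add: gstar_f_def)
qed

lemma gstar_eq_zero_imp_factor_zero:
  fixes RR SS :: "(nat set \<Rightarrow> 'a::mult_zero) set"
  assumes domain: "\<And>a b :: 'a. a * b = 0 \<Longrightarrow> a = 0 \<or> b = 0"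
    and RR: "RR \<subseteq> wgraphs n" and SS: "SS \<subseteq> wgraphs n" and prod: "gstar n RR SS = {zero_graph}"
  shows "RR = {zero_graph} \<or> SS = {zero_graph}"
proof (rule ccontr)
  assume "\<not> ?thesis"
  moreover have "RR \<noteq> {}" "SS \<noteq> {}" using prod unfolding gstar_def by auto
  ultimately obtain H G where H: "H \<in> RR" "H \<noteq> zero_graph" and G: "G \<in> SS" "G \<noteq> zero_graph"
    by blast
  obtain e e' where w: "H e \<noteq> 0" "G e' \<noteq> 0"
    using H(2) G(2) by (auto simp: zero_graph_def fun_eq_iff)
  have "e \<in> edges n" "e' \<in> edges n" using w H(1) G(1) RR SS by (auto simp: wgraphs_def)
  then have "H e * G e' = 0"
    using gstar_subset_zero_imp_weights_annihilate[OF _ H(1) G(1)] prod by blast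
  with w domain show False by blast
qed

definition const_graph :: "nat \<Rightarrow> 'a::zero \<Rightarrow> nat set \<Rightarrow> 'a" where
  "const_graph n c = (\<lambda>e. if e \<in> edges n then c else 0)"

lemma const_graph_in_wgraphs: "const_graph n c \<in> wgraphs n"
  by (simp add: const_graph_def wgraphs_def)

lemma const_graph_eq_zero_graph_iff:
  assumes "n \<ge> 2"
  shows "const_graph n c = zero_graph \<longleftrightarrow> c = 0"
proof -
  have "{0, 1} \<in> edges n" using assms by (auto simp: edges_def)
  then show ?thesis by (auto simp: const_graph_def zero_graph_def fun_eq_iff)
qed

lemma gstar_const_graphs:
  "gstar n {const_graph n a} {const_graph n b} = {const_graph n (a * b)}"
proof -
  have prod: "gstar_f n (const_graph n a) (const_graph n b) f = const_graph n (a * b)"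
    if "bij_betw f {..<n} {..<n}" for f
    using bij_image_edges[OF that] by (auto simp: gstar_f_def const_graph_def)
  have "bij_betw id {..<n} {..<n}" by simp
  then have "\<exists>f. const_graph n (a * b) = gstar_f n (const_graph n a) (const_graph n b) f
      \<and> bij_betw f {..<n} {..<n}"
    using prod by metis
  with prod show ?thesis unfolding gstar_def by auto
qed

theorem mainTheorem14:
  fixes n :: nat
  assumes "(0::'a::comm_ring_1) \<noteq> 1" and "n \<ge> 2"
  shows "(\<forall>a b :: 'a. a * b = 0 \<longrightarrow> a = 0 \<or> b = 0) \<longleftrightarrow>
    (\<forall>RR SS :: (nat set \<Rightarrow> 'a) set.
       RR \<subseteq> wgraphs n \<longrightarrow> SS \<subseteq> wgraphs n \<longrightarrow>
       gstar n RR SS = {zero_graph} \<longrightarrow> RR = {zero_graph} \<or> SS = {zero_graph})"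
proof (intro iffI allI impI)
  fix RR SS :: "(nat set \<Rightarrow> 'a) set"
  assume "\<forall>a b :: 'a. a * b = 0 \<longrightarrow> a = 0 \<or> b = 0"
    and "RR \<subseteq> wgraphs n" "SS \<subseteq> wgraphs n" "gstar n RR SS = {zero_graph}"
  then show "RR = {zero_graph} \<or> SS = {zero_graph}"
    by (intro gstar_eq_zero_imp_factor_zero) auto
next
  fix a b :: 'a
  assume factor_zero: "\<forall>RR SS :: (nat set \<Rightarrow> 'a) set.
       RR \<subseteq> wgraphs n \<longrightarrow> SS \<subseteq> wgraphs n \<longrightarrow>
       gstar n RR SS = {zero_graph} \<longrightarrow> RR = {zero_graph} \<or> SS = {zero_graph}"
    and "a * b = 0"
  note const_zero_iff = const_graph_eq_zero_graph_iff[OF assms(2)]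
  have "gstar n {const_graph n a} {const_graph n b} = {zero_graph}"
    using \<open>a * b = 0\<close> by (simp add: gstar_const_graphs const_zero_iff)
  then have "{const_graph n a} = {zero_graph} \<or> {const_graph n b} = {zero_graph}"
    using factor_zero[rule_format, of "{const_graph n a}" "{const_graph n b}"]
    by (simp add: const_graph_in_wgraphs)
  then show "a = 0 \<or> b = 0" by (simp add: const_zero_iff)
qed

end
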